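(* Let $R$ be a $*$-ring with $2\in U(R)$. Then every $u\in R$ with $u^2=1$ satisfies $u^*=u$ if and only if every idempotent of $R$ is a projection.
   Context: A $*$-ring is a ring with identity with an involution $*$. A projection is $p$ with $p^2=p=p^*$. $U(R)$ is the unit group. *)

theory Defs
  imports Main
begin

definition is_involution :: "('a::ring_1 \<Rightarrow> 'a) \<Rightarrow> bool" where
  "is_involution star \<longleftrightarrow>
     (\<forall>a b. star (a + b) = star a + star b) \<and>
     (\<forall>a b. star (a * b) = star b * star a) \<and>
     (\<forall>a. star (star a) = a)"

definition is_unit_ring :: "'a::ring_1 \<Rightarrow> bool" where
  "is_unit_ring x \<longleftrightarrow> (\<exists>y. x * y = 1 \<and> y * x = 1)"

definition is_projection :: "('a::ring_1 \<Rightarrow> 'a) \<Rightarrow> 'a \<Rightarrow> bool" where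
  "is_projection star p \<longleftrightarrow> p * p = p \<and> p = star p"

end

theory Submission
  imports Defs
begin

text \<open>For a unit \<open>2\<close>, the maps \<open>e \<mapsto> 1 - 2e\<close> and \<open>u \<mapsto> (1 + u)/2\<close> are mutually inverse
  bijections between idempotents and square roots of \<open>1\<close>. Both are affine with coefficients
  fixed by the involution, so \<open>e\<close> is self-adjoint exactly when \<open>1 - 2e\<close> is.\<close>

lemma involution_add: "is_involution star \<Longrightarrow> star (a + b) = star a + star b"
  and involution_mult: "is_involution star \<Longrightarrow> star (a * b) = star b * star a"
  and involution_involutive: "is_involution star \<Longrightarrow> star (star a) = a"
  unfolding is_involution_def by auto

lemma involution_diff:
  assumes "is_involution star"
  shows "star (a - b) = star a - star b"
proof -
  have "star (a - b) + star b = star a"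
    using involution_add[OF assms, of "a - b" b] by simp
  then show ?thesis by (simp add: eq_diff_eq)
qed

lemma involution_uminus:
  assumes "is_involution star"
  shows "star (- a) = - star a"
  using involution_diff[OF assms, of 0 a] involution_diff[OF assms, of 0 0] by simp

lemma involution_one:
  assumes "is_involution star"
  shows "star 1 = 1"
proof -
  have "star 1 = star 1 * star (star 1)" using involution_involutive[OF assms] by simp
  also have "\<dots> = star (star 1 * 1)" by (rule involution_mult[OF assms, symmetric])
  also have "\<dots> = 1" using involution_involutive[OF assms] by simp
  finally show ?thesis .
qed

lemma involution_one_minus_two:
  assumes "is_involution star"
  shows "star (1 - 2 * a) = 1 - 2 * star a"
  using involution_diff[OF assms] involution_add[OF assms] involution_one[OF assms]
  by (simp add: mult_2)

lemma unit_two_inverse_central: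
  fixes h :: "'a::ring_1"
  assumes "2 * h = 1" "h * 2 = 1"
  shows "h * x = x * h"
proof -
  have "h * x = h * (x * (2 * h))" by (simp add: assms)
  also have "\<dots> = h * (2 * x) * h" by (simp add: mult_2 mult_2_right ring_distribs mult.assoc)
  also have "\<dots> = x * h" by (simp add: mult.assoc[symmetric] assms)
  finally show ?thesis .
qed

lemma unit_two_cancel:
  fixes a b :: "'a::ring_1"
  assumes "is_unit_ring (2::'a)" "2 * a = 2 * b"
  shows "a = b"
proof -
  obtain h where "h * 2 = (1::'a)" using assms(1) unfolding is_unit_ring_def by blast
  then have "h * (2 * a) = h * (2 * b)" and "\<And>c. h * (2 * c) = c"
    using assms(2) by (simp_all add: mult.assoc[symmetric])
  then show ?thesis by metis
qed

lemma idempotent_reflection_square: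
  fixes e :: "'a::ring_1"
  assumes "e * e = e"
  shows "(1 - 2 * e) * (1 - 2 * e) = 1"
  by (simp add: algebra_simps assms mult_2 mult_2_right)

lemma square_one_half_idempotent:
  fixes u h :: "'a::ring_1"
  assumes "u * u = 1" "2 * h = 1" "h * 2 = 1"
  shows "((1 + u) * h) * ((1 + u) * h) = (1 + u) * h"
proof -
  have "(1 + u) * (1 + u) = (1 + u) * 2" by (simp add: algebra_simps assms(1) mult_2_right)
  moreover have "h * (1 + u) = (1 + u) * h" using unit_two_inverse_central assms(2,3) by blast
  ultimately have "((1 + u) * h) * ((1 + u) * h) = (1 + u) * (2 * h) * h"
    by (metis mult.assoc)
  also have "\<dots> = (1 + u) * h" using assms(2) by simp
  finally show ?thesis .
qed

lemma two_mult_half: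
  fixes a h :: "'a::ring_1"
  assumes "h * 2 = 1"
  shows "2 * (a * h) = a"
proof -
  have "2 * (a * h) = a * (h * 2)"
    by (simp add: mult_2 mult_2_right distrib_left distrib_right)
  then show ?thesis using assms by simp
qed

theorem lemma2p3:
  fixes star :: "'a::ring_1 \<Rightarrow> 'a"
  assumes "is_involution star"
    and "is_unit_ring (2::'a)"
  shows "(\<forall>u::'a. u * u = 1 \<longrightarrow> star u = u) \<longleftrightarrow>
         (\<forall>e::'a. e * e = e \<longrightarrow> is_projection star e)"
proof
  assume symmetric: "\<forall>u::'a. u * u = 1 \<longrightarrow> star u = u"
  show "\<forall>e::'a. e * e = e \<longrightarrow> is_projection star e"
  proof (intro allI impI)
    fix e :: 'a assume "e * e = e"
    then have "1 - 2 * star e = 1 - 2 * e"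
      using symmetric idempotent_reflection_square involution_one_minus_two[OF assms(1)] by metis
    then have "star e = e" using unit_two_cancel[OF assms(2)] by simp
    with \<open>e * e = e\<close> show "is_projection star e" unfolding is_projection_def by simp
  qed
next
  assume projections: "\<forall>e::'a. e * e = e \<longrightarrow> is_projection star e"
  show "\<forall>u::'a. u * u = 1 \<longrightarrow> star u = u"
  proof (intro allI impI)
    fix u :: 'a assume "u * u = 1"
    obtain h where h: "2 * h = (1::'a)" "h * 2 = 1"
      using assms(2) unfolding is_unit_ring_def by blast
    define e where "e = (1 + u) * h"
    have "star e = e"
      using projections square_one_half_idempotent[OF \<open>u * u = 1\<close> h]
      unfolding e_def is_projection_def by simp
    moreover have "u = - (1 - 2 * e)"
      using two_mult_half[OF h(2), of "1 + u"] unfolding e_def by simp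
    ultimately show "star u = u"
      using involution_one_minus_two[OF assms(1), of e] involution_uminus[OF assms(1)] by metis
  qed
qed

end
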